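(* Let $u,v\in\mathbb{Z}[i]$ with $u+v\in O^I$, $uv\equiv0\pmod{1+i}$ and $\gcd(u,v)\in U$, and suppose the discriminant $(u+v)^2+4iuv$ of $z^2-(u+v)z-iuv=0$ is a square in $\mathbb{Z}[i]$. Then there exist $x,y\in\mathbb{Z}[i]$ with $\gcd(x,y)\in U$ such that $x-y=u+v$ and $xy=iuv$.
   Context: $\mathbb{Z}[i]$ is the ring of Gaussian integers, $U=\{1,-1,i,-i\}$ its unit group; $R(\alpha),I(\alpha)$ are real and imaginary parts. $\gcd(x,y)\in U$ means no common non-unit divisor. $O=\{\alpha: R(\alpha)+I(\alpha)\equiv1\pmod 2\}$, $O^I=\{\alpha\in O: R(\alpha)\equiv 1\pmod 4\}$. *)

theory Defs
  imports Complex_Main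
begin

definition GI :: "complex set" where
  "GI = {z. Re z \<in> \<int> \<and> Im z \<in> \<int>}"

definition gdvd :: "complex \<Rightarrow> complex \<Rightarrow> bool" (infix "gdvd" 50) where
  "a gdvd b \<longleftrightarrow> (\<exists>k\<in>GI. b = a * k)"

definition gunits :: "complex set" where
  "gunits = {1, -1, \<i>, -\<i>}"

text \<open>gcd(x,y) in U: x and y have no common non-unit divisor in Z[i].\<close>
definition gcoprime :: "complex \<Rightarrow> complex \<Rightarrow> bool" where
  "gcoprime x y \<longleftrightarrow> (\<forall>d\<in>GI. d gdvd x \<and> d gdvd y \<longrightarrow> d \<in> gunits)"

definition GO :: "complex set" where
  "GO = {z\<in>GI. odd (\<lfloor>Re z\<rfloor> + \<lfloor>Im z\<rfloor>)}"

definition GOI :: "complex set" where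
  "GOI = {z\<in>GO. \<lfloor>Re z\<rfloor> mod 4 = 1}"

end

theory Submission
  imports Defs
begin

text \<open>The roots of \<open>z\<^sup>2 - s z - m\<close> are \<open>x = (s + w)/2\<close> and \<open>-y = (s - w)/2\<close>, where
  \<open>w\<^sup>2 = s\<^sup>2 + 4m\<close>; they satisfy \<open>x - y = s\<close> and \<open>x y = m\<close>. Since \<open>s = u + v\<close> has real and
  imaginary parts of different parity, comparing \<open>w\<^sup>2\<close> with \<open>s\<^sup>2\<close> modulo 4 forces
  \<open>w \<equiv> s (mod 2)\<close>, so \<open>x, y\<close> are Gaussian integers. A common divisor of \<open>x\<close> and \<open>y\<close>
  divides \<open>u + v\<close> and \<open>u v\<close>, hence \<open>u\<^sup>2\<close> and \<open>v\<^sup>2\<close>, hence \<open>(p u + q v)\<^sup>3 = 1\<close> for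
  a Bezout relation of the coprime pair \<open>u, v\<close>; so it is a unit.\<close>

lemma GI_iff: "z \<in> GI \<longleftrightarrow> Re z \<in> \<int> \<and> Im z \<in> \<int>"
  by (simp add: GI_def)

lemma GI_0 [simp, intro]: "0 \<in> GI" by (simp add: GI_iff)
lemma GI_1 [simp, intro]: "1 \<in> GI" by (simp add: GI_iff)
lemma GI_add [intro]: "a \<in> GI \<Longrightarrow> b \<in> GI \<Longrightarrow> a + b \<in> GI" by (simp add: GI_iff)
lemma GI_diff [intro]: "a \<in> GI \<Longrightarrow> b \<in> GI \<Longrightarrow> a - b \<in> GI" by (simp add: GI_iff)
lemma GI_uminus [intro]: "a \<in> GI \<Longrightarrow> - a \<in> GI" by (simp add: GI_iff)
lemma GI_mult [intro]: "a \<in> GI \<Longrightarrow> b \<in> GI \<Longrightarrow> a * b \<in> GI" by (simp add: GI_iff)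
lemma GI_power [intro]: "a \<in> GI \<Longrightarrow> a ^ n \<in> GI" by (induction n) auto
lemma GI_numeral [simp, intro]: "numeral n \<in> GI" by (simp add: GI_iff)
lemma GI_imaginary_unit [simp, intro]: "\<i> \<in> GI" by (simp add: GI_iff)

lemma GIE:
  assumes "z \<in> GI"
  obtains a b :: int where "Re z = of_int a" "Im z = of_int b"
  using assms by (auto simp: GI_iff elim!: Ints_cases)

lemma gdvd_mult: "d gdvd a \<Longrightarrow> c \<in> GI \<Longrightarrow> d gdvd a * c"
  unfolding gdvd_def by (metis GI_mult mult.assoc)

lemma gdvd_add: "d gdvd a \<Longrightarrow> d gdvd b \<Longrightarrow> d gdvd a + b"
  unfolding gdvd_def by (metis GI_add distrib_left)

lemma gdvd_diff: "d gdvd a \<Longrightarrow> d gdvd b \<Longrightarrow> d gdvd a - b"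
  unfolding gdvd_def by (metis GI_diff right_diff_distrib)

lemma gdvd_0: "d gdvd 0"
  unfolding gdvd_def by (metis GI_0 mult_zero_right)

definition gnorm :: "complex \<Rightarrow> nat" where
  "gnorm z = nat \<lfloor>cmod z ^ 2\<rfloor>"

lemma of_nat_gnorm: "z \<in> GI \<Longrightarrow> real (gnorm z) = cmod z ^ 2"
  by (elim GIE) (simp add: gnorm_def cmod_power2 flip: of_int_power of_int_add)

lemma gnorm_less: "a \<in> GI \<Longrightarrow> b \<in> GI \<Longrightarrow> cmod a < cmod b \<Longrightarrow> gnorm a < gnorm b"
  by (metis of_nat_gnorm of_nat_less_imp_less norm_ge_zero power_strict_mono zero_less_numeral)

lemma gdiv_remainder:
  assumes "a \<in> GI" and "b \<noteq> 0"
  shows "\<exists>q\<in>GI. cmod (a - q * b) < cmod b"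
proof -
  define z where "z = a / b"
  define q where "q = Complex (of_int (round (Re z))) (of_int (round (Im z)))"
  have "q \<in> GI"
    by (simp add: q_def GI_iff)
  have "\<bar>Re (z - q)\<bar> \<le> 1/2" "\<bar>Im (z - q)\<bar> \<le> 1/2"
    unfolding q_def using of_int_round_abs_le[of "Re z"] of_int_round_abs_le[of "Im z"]
    by (simp_all add: abs_minus_commute)
  then have "Re (z - q) ^ 2 \<le> (1/2) ^ 2" "Im (z - q) ^ 2 \<le> (1/2) ^ 2"
    by (simp_all add: abs_le_square_iff[symmetric])
  then have "cmod (z - q) ^ 2 < 1 ^ 2"
    by (simp add: cmod_power2 power_divide)
  then have "cmod (z - q) < 1"
    by (rule power2_less_imp_less) simp
  moreover have "a - q * b = b * (z - q)"
    using assms(2) by (simp add: z_def algebra_simps)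
  ultimately have "cmod (a - q * b) < cmod b"
    using assms(2) by (simp add: norm_mult)
  with \<open>q \<in> GI\<close> show ?thesis by blast
qed

lemma gdvd_one_imp_gunits:
  assumes "d \<in> GI" and "d gdvd 1"
  shows "d \<in> gunits"
proof -
  obtain k where "k \<in> GI" and "1 = d * k"
    using assms(2) by (auto simp: gdvd_def)
  then have "cmod d ^ 2 * cmod k ^ 2 = 1"
    by (metis norm_mult norm_one power_mult_distrib one_power2)
  then have "gnorm d * gnorm k = 1"
    using assms(1) \<open>k \<in> GI\<close> by (metis of_nat_gnorm of_nat_eq_1_iff of_nat_mult)
  then have "cmod d ^ 2 = 1"
    using of_nat_gnorm[OF assms(1)] by simp
  moreover obtain a b where ab: "Re d = of_int a" "Im d = of_int b"
    using assms(1) by (rule GIE)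
  ultimately have "a\<^sup>2 + b\<^sup>2 = 1"
    by (simp add: cmod_power2) (metis of_int_eq_1_iff of_int_add of_int_power)
  then have "a\<^sup>2 \<le> 1" "b\<^sup>2 \<le> 1"
    by (smt (verit) zero_le_power2)+
  then have "\<bar>a\<bar> \<le> 1" "\<bar>b\<bar> \<le> 1"
    by (simp_all add: abs_square_le_1)
  then have "a \<in> {-1, 0, 1}" "b \<in> {-1, 0, 1}"
    by auto
  then have "a = 1 \<and> b = 0 \<or> a = -1 \<and> b = 0 \<or> a = 0 \<and> b = 1 \<or> a = 0 \<and> b = -1"
    using \<open>a\<^sup>2 + b\<^sup>2 = 1\<close> by auto
  then show ?thesis
    unfolding gunits_def using ab by (auto simp: complex_eq_iff)
qed

lemma gcoprime_nonzero:
  assumes "gcoprime u v"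
  shows "u \<noteq> 0 \<or> v \<noteq> 0"
proof (rule ccontr)
  assume "\<not> ?thesis"
  then have "(2::complex) \<in> gunits"
    using assms gdvd_0[of 2] by (auto simp: gcoprime_def)
  then show False
    by (auto simp: gunits_def complex_eq_iff)
qed

text \<open>The ideal \<open>(u, v)\<close> is generated by an element of least norm, which divides
  \<open>u\<close> and \<open>v\<close> by division with remainder.\<close>

lemma gcoprime_bezout:
  assumes u: "u \<in> GI" and v: "v \<in> GI" and cop: "gcoprime u v"
  shows "\<exists>p\<in>GI. \<exists>q\<in>GI. p * u + q * v = 1"
proof -
  define S where "S = {p * u + q * v | p q. p \<in> GI \<and> q \<in> GI}"
  have S_GI: "S \<subseteq> GI"
    using u v by (auto simp: S_def)
  have "u = 1 * u + 0 * v" "v = 0 * u + 1 * v"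
    by simp_all
  then have "u \<in> S" "v \<in> S"
    unfolding S_def by blast+
  then obtain x0 where "x0 \<in> S - {0}"
    using gcoprime_nonzero[OF cop] by blast
  from ex_has_least_nat[of "\<lambda>x. x \<in> S - {0}" x0 gnorm, OF this]
  obtain g where g: "g \<in> S - {0}" and g_min: "\<And>h. h \<in> S - {0} \<Longrightarrow> gnorm g \<le> gnorm h"
    by blast
  obtain p q where pq: "p \<in> GI" "q \<in> GI" "g = p * u + q * v"
    using g by (auto simp: S_def)
  have "g gdvd a" if "a \<in> S" for a
  proof -
    have "a \<in> GI" "g \<in> GI" "g \<noteq> 0"
      using that g S_GI by auto
    then obtain c where c: "c \<in> GI" "cmod (a - c * g) < cmod g"
      using gdiv_remainder by blast
    obtain p' q' where "p' \<in> GI" "q' \<in> GI" "a = p' * u + q' * v"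
      using \<open>a \<in> S\<close> by (auto simp: S_def)
    then have "a - c * g = (p' - c * p) * u + (q' - c * q) * v"
      using pq by (simp add: algebra_simps)
    then have "a - c * g \<in> S"
      using \<open>p' \<in> GI\<close> \<open>q' \<in> GI\<close> c(1) pq by (auto simp: S_def)
    moreover have "gnorm (a - c * g) < gnorm g"
      using \<open>a \<in> GI\<close> \<open>g \<in> GI\<close> c by (intro gnorm_less) auto
    ultimately have "a - c * g = 0"
      using g_min by (meson DiffI leD singletonD)
    then have "a = g * c"
      by (simp add: algebra_simps)
    then show ?thesis
      using c(1) by (auto simp: gdvd_def)
  qed
  then have "g gdvd u" "g gdvd v"
    using \<open>u \<in> S\<close> \<open>v \<in> S\<close> by blast+
  then have "g \<in> gunits"
    using cop g S_GI unfolding gcoprime_def by blast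
  then have "cnj g * g = 1" "cnj g \<in> GI"
    by (auto simp: gunits_def GI_iff)
  then have "(cnj g * p) * u + (cnj g * q) * v = 1"
    using pq by (simp add: algebra_simps)
  then show ?thesis
    using \<open>cnj g \<in> GI\<close> pq by blast
qed

lemma gcoprime_add_mult:
  assumes u: "u \<in> GI" and v: "v \<in> GI" and cop: "gcoprime u v"
  shows "gcoprime (u + v) (u * v)"
  unfolding gcoprime_def
proof (intro ballI impI)
  fix d assume "d \<in> GI" and d: "d gdvd u + v \<and> d gdvd u * v"
  obtain p q where pq: "p \<in> GI" "q \<in> GI" "p * u + q * v = 1"
    using gcoprime_bezout[OF u v cop] by blast
  have "d gdvd (u + v) * u - u * v" "d gdvd (u + v) * v - u * v"
    using d u v by (blast intro: gdvd_diff gdvd_mult)+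
  then have "d gdvd u\<^sup>2" "d gdvd v\<^sup>2"
    by (simp_all add: power2_eq_square algebra_simps)
  moreover have "p ^ 3 * u + 3 * p\<^sup>2 * q * v \<in> GI" "3 * p * q\<^sup>2 * u + q ^ 3 * v \<in> GI"
    using pq u v by (simp_all add: GI_add GI_mult GI_power)
  ultimately have "d gdvd u\<^sup>2 * (p ^ 3 * u + 3 * p\<^sup>2 * q * v) + v\<^sup>2 * (3 * p * q\<^sup>2 * u + q ^ 3 * v)"
    by (intro gdvd_add gdvd_mult)
  also have "\<dots> = (p * u + q * v) ^ 3"
    by (simp add: power2_eq_square power3_eq_cube algebra_simps)
  finally show "d \<in> gunits"
    using pq \<open>d \<in> GI\<close> by (simp add: gdvd_one_imp_gunits)
qed

lemma gcoprime_mult_imaginary_unit: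
  assumes "gcoprime a b"
  shows "gcoprime a (\<i> * b)"
  unfolding gcoprime_def
proof (intro ballI impI)
  fix d assume "d \<in> GI" and d: "d gdvd a \<and> d gdvd \<i> * b"
  then have "d gdvd \<i> * b * (- \<i>)"
    using gdvd_mult[of d "\<i> * b" "- \<i>"] by (simp add: GI_uminus)
  moreover have "\<i> * b * (- \<i>) = b"
    by (simp add: algebra_simps)
  ultimately have "d gdvd b"
    by metis
  with d \<open>d \<in> GI\<close> assms show "d \<in> gunits"
    by (auto simp: gcoprime_def)
qed

lemma gcoprime_of_diff_mult:
  assumes "y \<in> GI" and "gcoprime (x - y) (x * y)"
  shows "gcoprime x y"
  unfolding gcoprime_def
proof (intro ballI impI)
  fix d assume "d \<in> GI" and "d gdvd x \<and> d gdvd y"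
  then have "d gdvd x - y" "d gdvd x * y"
    using assms(1) by (simp_all add: gdvd_diff gdvd_mult)
  with \<open>d \<in> GI\<close> assms(2) show "d \<in> gunits"
    by (auto simp: gcoprime_def)
qed

lemma half_GI:
  assumes "Re z = of_int a" "Im z = of_int b" "even a" "even b"
  shows "z / 2 \<in> GI"
  using assms by (auto simp: GI_iff elim!: evenE)

lemma square_mod_4: "(x::int)\<^sup>2 mod 4 = (if even x then 0 else 1)"
proof (cases "even x")
  case True
  then show ?thesis
    by (auto elim!: evenE simp: power2_eq_square)
next
  case False
  then obtain k where "x = 2 * k + 1"
    by (blast elim: oddE)
  then have "x\<^sup>2 = 4 * (k * k + k) + 1"
    by (simp add: power2_eq_square algebra_simps)
  then have "x\<^sup>2 mod 4 = 1"
    by (simp only: mod_mult_self4) simp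
  with False show ?thesis
    by simp
qed

lemma even_sums_of_square_difference:
  fixes a b c d k :: int
  assumes "odd (a + b)" and "c\<^sup>2 - d\<^sup>2 = a\<^sup>2 - b\<^sup>2 + 4 * k"
  shows "even (a + c) \<and> even (b + d)"
proof -
  have "(c\<^sup>2 mod 4 - d\<^sup>2 mod 4) mod 4 = (a\<^sup>2 mod 4 - b\<^sup>2 mod 4) mod 4"
    using assms(2) by (simp add: mod_diff_eq)
  then have "((if even c then 0 else 1) - (if even d then 0 else 1)) mod 4
      = ((if even a then 0 else 1) - (if even b then 0 else 1) :: int) mod 4"
    by (simp only: square_mod_4)
  then show ?thesis
    using assms(1) by (auto split: if_splits)
qed

lemma half_sum_diff_GI:
  assumes s: "s \<in> GO" and w: "w \<in> GI" and m: "m \<in> GI" and disc: "w\<^sup>2 = s\<^sup>2 + 4 * m"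
  shows "(s + w) / 2 \<in> GI" and "(w - s) / 2 \<in> GI"
proof -
  obtain a b where ab: "Re s = of_int a" "Im s = of_int b"
    using s unfolding GO_def by (blast elim: GIE)
  obtain c d where cd: "Re w = of_int c" "Im w = of_int d"
    using w by (rule GIE)
  obtain k where k: "Re m = of_int k"
    using m by (rule GIE)
  have "odd (a + b)"
    using s ab by (simp add: GO_def)
  have "real_of_int (c\<^sup>2 - d\<^sup>2) = of_int (a\<^sup>2 - b\<^sup>2 + 4 * k)"
    using arg_cong[OF disc, of Re] ab cd k by (simp add: power2_eq_square)
  then have "c\<^sup>2 - d\<^sup>2 = a\<^sup>2 - b\<^sup>2 + 4 * k"
    by (metis of_int_eq_iff)
  then have "even (a + c) \<and> even (b + d)"
    by (rule even_sums_of_square_difference[OF \<open>odd (a + b)\<close>])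
  moreover have "even (c - a) \<and> even (d - b)"
    using calculation by presburger
  ultimately show "(s + w) / 2 \<in> GI" "(w - s) / 2 \<in> GI"
    using half_GI[of "s + w" "a + c" "b + d"] half_GI[of "w - s" "c - a" "d - b"] ab cd by simp_all
qed

theorem corollary4p22:
  fixes u v :: complex
  assumes "u \<in> GI" and "v \<in> GI"
    and "u + v \<in> GOI"
    and "(1 + \<i>) gdvd (u * v)"
    and "gcoprime u v"
    and "\<exists>w\<in>GI. w ^ 2 = (u + v) ^ 2 + 4 * \<i> * u * v"
  shows "\<exists>x\<in>GI. \<exists>y\<in>GI. gcoprime x y \<and> x - y = u + v \<and> x * y = \<i> * u * v"
proof -
  obtain w where w: "w \<in> GI" and disc: "w\<^sup>2 = (u + v)\<^sup>2 + 4 * (\<i> * u * v)"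
    using assms(6) by (auto simp: algebra_simps)
  define x where "x = (u + v + w) / 2"
  define y where "y = (w - (u + v)) / 2"
  have "x \<in> GI" "y \<in> GI"
    using half_sum_diff_GI[OF _ w _ disc] assms(1-3) by (auto simp: GOI_def x_def y_def)
  have diff: "x - y = u + v"
    by (simp add: x_def y_def field_simps)
  have prod: "x * y = \<i> * u * v"
    using disc by (simp add: x_def y_def field_simps power2_eq_square)
  have "gcoprime (u + v) (\<i> * (u * v))"
    using gcoprime_add_mult[OF assms(1,2,5)] by (rule gcoprime_mult_imaginary_unit)
  then have "gcoprime (x - y) (x * y)"
    unfolding diff prod by (simp only: mult.assoc)
  then have "gcoprime x y"
    by (rule gcoprime_of_diff_mult[OF \<open>y \<in> GI\<close>])
  with \<open>x \<in> GI\<close> \<open>y \<in> GI\<close> diff prod show ?thesis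
    by blast
qed

end
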